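(* Let $P,Q$ be finite posets, $R$ an indecomposable commutative unital ring, $\Phi:I^3(P,R)\to I^3(Q,R)$ an $R$-linear algebra isomorphism, and $\varphi:P\to Q$ the bijection such that $\Phi(e_x)-e_{\varphi(x)}\in J^3_1(Q,R)$ for all $x\in P$ (such a bijection exists and is unique). Then for all $x<y$ in $P$ with $l(x,y)=1$ we have $\varphi(x)<\varphi(y)$ and $$\Phi(e_{xxy}+e_{xyy})=e_{\varphi(x)\varphi(x)\varphi(y)}+e_{\varphi(x)\varphi(y)\varphi(y)}+\sigma_{xy}$$ for some $\sigma_{xy}\in J^3_2(Q,R)$.
   Context: A commutative ring is indecomposable if its only idempotents are $0$ and $1$. For a finite poset $P$, $P^3_\le=\{(x,y,z)\in P^3: x\le y\le z\}$, and $I^3(P,R)$ is the $R$-module of functions $f:P^3_\le\to R$ with multiplication $(fg)(x_1,x_2,x_3)=\sum f(x_1,y_1,y_2)g(y_1,y_2,x_3)$ over all $x_1\le y_1\le x_2\le y_2\le x_3$. For $x\le y\le z$, $e_{xyz}$ is the function equal to $1$ at $(x,y,z)$ and $0$ elsewhere, and $e_x:=e_{xxx}$. For $a\le b$, $l(a,b)$ is the maximum of $|C|-1$ over chains $C$ in the interval $[a,b]$. $J^3_k(Q,R)=\{f\in I^3(Q,R): f(x_1,x_2,x_3)=0 \text{ whenever } l(x_1,x_3)<k\}$. *)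

theory Defs
  imports Main
begin

definition indecomposable_ring :: "'r::comm_ring_1 itself \<Rightarrow> bool" where
  "indecomposable_ring _ \<longleftrightarrow> (\<forall>e::'r. e * e = e \<longrightarrow> e = 0 \<or> e = 1)"

definition I3 :: "('p::order \<times> 'p \<times> 'p \<Rightarrow> 'r::comm_ring_1) set" where
  "I3 = {f. \<forall>x y z. \<not> (x \<le> y \<and> y \<le> z) \<longrightarrow> f (x, y, z) = 0}"

definition mult3 :: "('p::{order,finite} \<times> 'p \<times> 'p \<Rightarrow> 'r::comm_ring_1)
    \<Rightarrow> ('p \<times> 'p \<times> 'p \<Rightarrow> 'r) \<Rightarrow> ('p \<times> 'p \<times> 'p \<Rightarrow> 'r)" where
  "mult3 f g = (\<lambda>(x1, x2, x3).
     if x1 \<le> x2 \<and> x2 \<le> x3 then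
       (\<Sum>(y1, y2)\<in>{(y1, y2). x1 \<le> y1 \<and> y1 \<le> x2 \<and> x2 \<le> y2 \<and> y2 \<le> x3}.
          f (x1, y1, y2) * g (y1, y2, x3))
     else 0)"

definition e3 :: "'p \<Rightarrow> 'p \<Rightarrow> 'p \<Rightarrow> ('p \<times> 'p \<times> 'p \<Rightarrow> 'r::comm_ring_1)" where
  "e3 x y z = (\<lambda>t. if t = (x, y, z) then 1 else 0)"

definition len :: "'p::{order,finite} \<Rightarrow> 'p \<Rightarrow> nat" where
  "len a b = Max {card C - 1 | C. C \<subseteq> {a..b} \<and> Complete_Partial_Order.chain (\<le>) C}"

definition J3 :: "nat \<Rightarrow> ('p::{order,finite} \<times> 'p \<times> 'p \<Rightarrow> 'r::comm_ring_1) set" where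
  "J3 k = {f \<in> I3. \<forall>x1 x2 x3. x1 \<le> x2 \<and> x2 \<le> x3 \<and> len x1 x3 < k \<longrightarrow> f (x1, x2, x3) = 0}"

definition alg_iso3 :: "(('p::{order,finite} \<times> 'p \<times> 'p \<Rightarrow> 'r::comm_ring_1)
    \<Rightarrow> ('q::{order,finite} \<times> 'q \<times> 'q \<Rightarrow> 'r)) \<Rightarrow> bool" where
  "alg_iso3 \<Phi> \<longleftrightarrow> bij_betw \<Phi> I3 I3
     \<and> (\<forall>f\<in>I3. \<forall>g\<in>I3. \<Phi> (\<lambda>t. f t + g t) = (\<lambda>t. \<Phi> f t + \<Phi> g t))
     \<and> (\<forall>f\<in>I3. \<forall>c. \<Phi> (\<lambda>t. c * f t) = (\<lambda>t. c * \<Phi> f t))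
     \<and> (\<forall>f\<in>I3. \<forall>g\<in>I3. \<Phi> (mult3 f g) = mult3 (\<Phi> f) (\<Phi> g))"

end

theory Submission
  imports Defs
begin

text \<open>
Put f = e_xxy + e_xyy. It is an idempotent in J^3_1 but not in J^3_2,
and e_z f = 0 for z \<noteq> x, f e_z = 0 for z \<noteq> y. Since \<Phi> preserves diagonal values,
\<Phi> h (\<phi> z, \<phi> z, \<phi> z) = h (z, z, z), the image g = \<Phi> f is an idempotent in J^3_1, and the
annihilation relations make g vanish at (a, a, b) and (a, b, b) for every covering pair a < b other
than (\<phi> x, \<phi> y). Moreover \<Phi> maps J^3_2 into itself: J^3_2 is spanned by the e_abc with
l(a, c) \<ge> 2, each of which lies in the ideal generated by some e_azc with a < z < c, and the image
of e_azc is annihilated on both sides by every \<Phi>(e_w). The inverse isomorphism satisfies the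
same hypotheses, so g is not in J^3_2 either. Hence (\<phi> x, \<phi> y) is a covering pair, and the
common value of g at (\<phi> x, \<phi> x, \<phi> y) and (\<phi> x, \<phi> y, \<phi> y) is a nonzero idempotent of R,
that is, 1.
\<close>

lemma fun3_eqI: "(\<And>x1 x2 x3. f (x1, x2, x3) = g (x1, x2, x3)) \<Longrightarrow> f = g"
  by (rule ext) (metis prod_cases3)

lemma e3_apply: "e3 a b c (x1, x2, x3) = (if x1 = a \<and> x2 = b \<and> x3 = c then 1 else 0)"
  by (simp add: e3_def)

lemma I3_e3: "a \<le> b \<Longrightarrow> b \<le> c \<Longrightarrow> e3 a b c \<in> I3"
  unfolding I3_def e3_def by auto

lemma I3_mult3: "mult3 f g \<in> I3"
  unfolding I3_def mult3_def by auto

lemma I3_add: "f \<in> I3 \<Longrightarrow> g \<in> I3 \<Longrightarrow> (\<lambda>t. f t + g t) \<in> I3"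
  unfolding I3_def by auto

lemma I3_diff: "f \<in> I3 \<Longrightarrow> g \<in> I3 \<Longrightarrow> (\<lambda>t. f t - g t) \<in> I3"
  unfolding I3_def by auto

lemma I3_smult: "f \<in> I3 \<Longrightarrow> (\<lambda>t. c * f t) \<in> I3"
  unfolding I3_def by auto

lemma I3_sum: "(\<And>i. i \<in> S \<Longrightarrow> F i \<in> I3) \<Longrightarrow> (\<lambda>t. \<Sum>i\<in>S. F i t) \<in> I3"
  unfolding I3_def by (auto intro: sum.neutral)

lemma J3_sum: "(\<And>i. i \<in> S \<Longrightarrow> F i \<in> J3 k) \<Longrightarrow> (\<lambda>t. \<Sum>i\<in>S. F i t) \<in> J3 k"
  unfolding J3_def I3_def by (auto intro: sum.neutral)

lemma J3_smult: "f \<in> J3 k \<Longrightarrow> (\<lambda>t. c * f t) \<in> J3 k"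
  unfolding J3_def I3_def by auto

lemma I3_expansion:
  fixes h :: "'p::finite \<times> 'p \<times> 'p \<Rightarrow> 'r::comm_ring_1"
  shows "h = (\<lambda>s. \<Sum>(a, b, c)\<in>UNIV. h (a, b, c) * e3 a b c s)"
proof
  fix s :: "'p \<times> 'p \<times> 'p"
  have "(\<lambda>(a, b, c). h (a, b, c) * e3 a b c s) = (\<lambda>t. if t = s then h s else 0)"
    by (auto simp: e3_def fun_eq_iff)
  then show "h s = (\<Sum>(a, b, c)\<in>UNIV. h (a, b, c) * e3 a b c s)"
    by simp
qed

lemma card_chain_le_len:
  assumes "C \<subseteq> {a..b}" "Complete_Partial_Order.chain (\<le>) C"
  shows "card C - 1 \<le> len a b"
  unfolding len_def using assms by (intro Max_ge) auto

lemma len_attained: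
  obtains C where "C \<subseteq> {a..b}" "Complete_Partial_Order.chain (\<le>) C" "len a b = card C - 1"
proof -
  have "len a b \<in> {card C - 1 | C. C \<subseteq> {a..b} \<and> Complete_Partial_Order.chain (\<le>) C}"
    unfolding len_def by (rule Max_in) (auto intro!: exI[of _ "{}"] simp: chain_empty)
  then show ?thesis
    using that by blast
qed

lemma len_refl: "len a a = 0"
proof -
  obtain C where "C \<subseteq> {a..a}" "len a a = card C - 1"
    by (rule len_attained)
  moreover have "card C \<le> 1"
    using \<open>C \<subseteq> {a..a}\<close> card_mono[of "{a}" C] by simp
  ultimately show ?thesis
    by simp
qed

lemma len_pos: "a < b \<Longrightarrow> 1 \<le> len a b"
  using card_chain_le_len[of "{a, b}" a b] by (auto simp: chain_def)

lemma len_ge_2: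
  assumes "a < z" "z < c"
  shows "2 \<le> len a c"
proof -
  have "a \<noteq> z" "z \<noteq> c" "a \<noteq> c"
    using assms less_trans[OF assms] by auto
  then have "card {a, z, c} = 3"
    by simp
  moreover have "Complete_Partial_Order.chain (\<le>) {a, z, c}"
    using assms by (auto simp: chain_def)
  moreover have "{a, z, c} \<subseteq> {a..c}"
    using assms less_imp_le less_trans by fastforce
  ultimately show ?thesis
    using card_chain_le_len[of "{a, z, c}" a c] by simp
qed

lemma len_ge_2_imp_between:
  assumes "2 \<le> len a c"
  shows "\<exists>z. a < z \<and> z < c"
proof -
  obtain C where C: "C \<subseteq> {a..c}" "len a c = card C - 1"
    by (rule len_attained)
  have "card C - card {a, c} \<le> card (C - {a, c})"
    by (rule diff_card_le_card_Diff) simp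
  moreover have "card {a, c} \<le> 2"
    by (simp add: card_insert_le_m1)
  ultimately have "C - {a, c} \<noteq> {}"
    using C(2) assms card_mono[of "{a, c}" C] by auto
  then obtain z where "z \<in> C" "z \<noteq> a" "z \<noteq> c"
    by auto
  with C(1) show ?thesis
    by (intro exI[of _ z]) (auto simp: order.strict_iff_order)
qed

lemma len_mono:
  assumes "a \<le> a'" "b' \<le> b"
  shows "len a' b' \<le> len a b"
proof -
  obtain C where C: "C \<subseteq> {a'..b'}" "Complete_Partial_Order.chain (\<le>) C" "len a' b' = card C - 1"
    by (rule len_attained)
  have "C \<subseteq> {a..b}"
    using C(1) assms by (meson atLeastAtMost_iff order.trans subsetD subsetI)
  then show ?thesis
    using card_chain_le_len C by simp
qed

definition covby :: "'p::order \<Rightarrow> 'p \<Rightarrow> bool" where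
  "covby a b \<longleftrightarrow> a < b \<and> (\<forall>t. a \<le> t \<and> t \<le> b \<longrightarrow> t = a \<or> t = b)"

lemma covby_iff_len: "covby a b \<longleftrightarrow> a < b \<and> len a b = 1"
proof
  assume "covby a b"
  then have "\<not> 2 \<le> len a b"
    using len_ge_2_imp_between unfolding covby_def by (force simp: order.strict_iff_order)
  then show "a < b \<and> len a b = 1"
    using \<open>covby a b\<close> len_pos unfolding covby_def by fastforce
next
  assume "a < b \<and> len a b = 1"
  then show "covby a b"
    unfolding covby_def using len_ge_2 by (fastforce simp: order.strict_iff_order)
qed

lemma len_less_1_iff:
  "x1 \<le> x2 \<and> x2 \<le> x3 \<and> len x1 x3 < 1 \<longleftrightarrow> x1 = x2 \<and> x2 = x3"
proof
  assume H: "x1 \<le> x2 \<and> x2 \<le> x3 \<and> len x1 x3 < 1"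
  then have "x1 = x3"
    using len_pos[of x1 x3] order_trans[of x1 x2 x3] by (auto simp: order.strict_iff_order)
  with H show "x1 = x2 \<and> x2 = x3"
    by auto
qed (simp add: len_refl)

lemma len_less_2_iff:
  "x1 \<le> x2 \<and> x2 \<le> x3 \<and> len x1 x3 < 2 \<longleftrightarrow>
     x1 = x2 \<and> x2 = x3 \<or> covby x1 x3 \<and> (x2 = x1 \<or> x2 = x3)"
proof
  assume H: "x1 \<le> x2 \<and> x2 \<le> x3 \<and> len x1 x3 < 2"
  show "x1 = x2 \<and> x2 = x3 \<or> covby x1 x3 \<and> (x2 = x1 \<or> x2 = x3)"
  proof (cases "x1 = x3")
    case False
    then have "covby x1 x3"
      using H len_pos[of x1 x3] order_trans[of x1 x2 x3]
      by (auto simp: covby_iff_len order.strict_iff_order)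
    with H show ?thesis
      unfolding covby_def by auto
  qed (use H in auto)
qed (auto simp: len_refl covby_iff_len)

lemma J3_1_iff: "h \<in> J3 1 \<longleftrightarrow> h \<in> I3 \<and> (\<forall>a. h (a, a, a) = 0)"
  unfolding J3_def len_less_1_iff by auto

lemma J3_2_iff:
  "h \<in> J3 2 \<longleftrightarrow> h \<in> I3 \<and> (\<forall>a. h (a, a, a) = 0)
     \<and> (\<forall>a b. covby a b \<longrightarrow> h (a, a, b) = 0 \<and> h (a, b, b) = 0)"
  unfolding J3_def len_less_2_iff by auto

lemma mult3_e3_left:
  "mult3 (e3 a b c) k (x1, x2, x3) =
     (if x1 = a \<and> a \<le> b \<and> b \<le> x2 \<and> x2 \<le> c \<and> c \<le> x3 then k (b, c, x3) else 0)"
proof -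
  let ?S = "{(y1, y2). x1 \<le> y1 \<and> y1 \<le> x2 \<and> x2 \<le> y2 \<and> y2 \<le> x3}"
  have "(\<Sum>(y1, y2)\<in>?S. e3 a b c (x1, y1, y2) * k (y1, y2, x3))
      = (\<Sum>y\<in>?S. if y = (b, c) then (if x1 = a then k (b, c, x3) else 0) else 0)"
    by (rule sum.cong) (auto simp: e3_def split: if_splits)
  also have "\<dots> = (if (b, c) \<in> ?S then (if x1 = a then k (b, c, x3) else 0) else 0)"
    by (rule sum.delta) simp
  finally have sum: "(\<Sum>(y1, y2)\<in>?S. e3 a b c (x1, y1, y2) * k (y1, y2, x3))
      = (if (b, c) \<in> ?S then (if x1 = a then k (b, c, x3) else 0) else 0)" .
  show ?thesis
  proof (cases "x1 = a \<and> a \<le> b \<and> b \<le> x2 \<and> x2 \<le> c \<and> c \<le> x3")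
    case True
    then have "x1 \<le> x2" "x2 \<le> x3"
      using order_trans[of a b x2] order_trans[of x2 c x3] by auto
    with True sum show ?thesis
      unfolding mult3_def by simp
  qed (use sum in \<open>auto simp: mult3_def\<close>)
qed

lemma mult3_e3_right:
  "mult3 k (e3 a b c) (x1, x2, x3) =
     (if x3 = c \<and> x1 \<le> a \<and> a \<le> x2 \<and> x2 \<le> b \<and> b \<le> c then k (x1, a, b) else 0)"
proof -
  let ?S = "{(y1, y2). x1 \<le> y1 \<and> y1 \<le> x2 \<and> x2 \<le> y2 \<and> y2 \<le> x3}"
  have "(\<Sum>(y1, y2)\<in>?S. k (x1, y1, y2) * e3 a b c (y1, y2, x3))
      = (\<Sum>y\<in>?S. if y = (a, b) then (if x3 = c then k (x1, a, b) else 0) else 0)"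
    by (rule sum.cong) (auto simp: e3_def split: if_splits)
  also have "\<dots> = (if (a, b) \<in> ?S then (if x3 = c then k (x1, a, b) else 0) else 0)"
    by (rule sum.delta) simp
  finally have sum: "(\<Sum>(y1, y2)\<in>?S. k (x1, y1, y2) * e3 a b c (y1, y2, x3))
      = (if (a, b) \<in> ?S then (if x3 = c then k (x1, a, b) else 0) else 0)" .
  show ?thesis
  proof (cases "x3 = c \<and> x1 \<le> a \<and> a \<le> x2 \<and> x2 \<le> b \<and> b \<le> c")
    case True
    then have "x1 \<le> x2" "x2 \<le> x3"
      using order_trans[of x1 a x2] order_trans[of x2 b c] by auto
    with True sum show ?thesis
      unfolding mult3_def by simp
  qed (use sum in \<open>auto simp: mult3_def\<close>)
qed

lemmas mult3_e3_simps = mult3_e3_left mult3_e3_right e3_apply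

lemma mult3_add_left: "mult3 (\<lambda>t. f t + g t) h = (\<lambda>t. mult3 f h t + mult3 g h t)"
  by (rule fun3_eqI) (auto simp: mult3_def distrib_right sum.distrib[symmetric] intro!: sum.cong)

lemma mult3_diag: "mult3 F G (a, a, a) = F (a, a, a) * G (a, a, a)"
proof -
  have "{(y1, y2). a \<le> y1 \<and> y1 \<le> a \<and> a \<le> y2 \<and> y2 \<le> a} = {(a, a)}"
    by (auto intro: order.antisym)
  then show ?thesis
    unfolding mult3_def by simp
qed

lemma mult3_covby_left:
  assumes "covby a b"
  shows "mult3 F G (a, a, b) = F (a, a, a) * G (a, a, b) + F (a, a, b) * G (a, b, b)"
proof -
  have "{(y1, y2). a \<le> y1 \<and> y1 \<le> a \<and> a \<le> y2 \<and> y2 \<le> b} = {(a, a), (a, b)}"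
    using assms unfolding covby_def by (auto intro: order.antisym)
  then show ?thesis
    using assms less_imp_neq[of a b] unfolding mult3_def covby_def by (simp add: less_imp_le)
qed

lemma mult3_covby_right:
  assumes "covby a b"
  shows "mult3 F G (a, b, b) = F (a, a, b) * G (a, b, b) + F (a, b, b) * G (b, b, b)"
proof -
  have "{(y1, y2). a \<le> y1 \<and> y1 \<le> b \<and> b \<le> y2 \<and> y2 \<le> b} = {(a, b), (b, b)}"
    using assms unfolding covby_def by (auto intro: order.antisym)
  then show ?thesis
    using assms less_imp_neq[of a b] unfolding mult3_def covby_def by (simp add: add.commute less_imp_le)
qed

lemma J3_mult3_left:
  assumes "Y \<in> J3 k"
  shows "mult3 X Y \<in> J3 k"
proof -
  have "Y (y1, y2, x3) = 0"
    if "x1 \<le> y1" "y1 \<le> x2" "x2 \<le> y2" "y2 \<le> x3" "len x1 x3 < k" for x1 x2 x3 y1 y2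
  proof -
    have "len y1 x3 \<le> len x1 x3"
      using that by (intro len_mono) auto
    then show ?thesis
      using assms that order_trans[of y1 x2 y2] unfolding J3_def by auto
  qed
  then show ?thesis
    unfolding J3_def using I3_mult3 by (auto simp: mult3_def intro!: sum.neutral)
qed

lemma J3_mult3_right:
  assumes "Y \<in> J3 k"
  shows "mult3 Y X \<in> J3 k"
proof -
  have "Y (x1, y1, y2) = 0"
    if "x1 \<le> y1" "y1 \<le> x2" "x2 \<le> y2" "y2 \<le> x3" "len x1 x3 < k" for x1 x2 x3 y1 y2
  proof -
    have "len x1 y2 \<le> len x1 x3"
      using that by (intro len_mono) auto
    then show ?thesis
      using assms that order_trans[of y1 x2 y2] unfolding J3_def by auto
  qed
  then show ?thesis
    unfolding J3_def using I3_mult3 by (auto simp: mult3_def intro!: sum.neutral)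
qed

lemma idempotent_J3_1_covby:
  assumes "h \<in> J3 1" "mult3 h h = h" "covby a b"
  shows "h (a, b, b) = h (a, a, b)" "h (a, a, b) * h (a, a, b) = h (a, a, b)"
proof -
  have diag: "h (a, a, a) = 0" "h (b, b, b) = 0"
    using assms(1) unfolding J3_1_iff by auto
  have "h (a, a, b) = h (a, a, b) * h (a, b, b)"
    using mult3_covby_left[OF assms(3), of h h] assms(2) diag by simp
  moreover have "h (a, b, b) = h (a, a, b) * h (a, b, b)"
    using mult3_covby_right[OF assms(3), of h h] assms(2) diag by simp
  ultimately show "h (a, b, b) = h (a, a, b)" "h (a, a, b) * h (a, a, b) = h (a, a, b)"
    by simp_all
qed

definition e3_edge :: "'p \<Rightarrow> 'p \<Rightarrow> ('p \<times> 'p \<times> 'p \<Rightarrow> 'r::comm_ring_1)" where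
  "e3_edge x y = (\<lambda>t. e3 x x y t + e3 x y y t)"

lemma I3_e3_edge: "x \<le> y \<Longrightarrow> e3_edge x y \<in> I3"
  unfolding e3_edge_def by (intro I3_add I3_e3) auto

lemma e3_edge_J3_1: "x < y \<Longrightarrow> e3_edge x y \<in> J3 1"
  using I3_e3_edge[OF less_imp_le] unfolding J3_1_iff by (auto simp: e3_edge_def e3_apply)

lemma e3_edge_not_J3_2: "covby x y \<Longrightarrow> e3_edge x y \<notin> J3 2"
  unfolding J3_2_iff covby_def by (auto simp: e3_edge_def e3_apply)

lemma e3_edge_idempotent: "covby x y \<Longrightarrow> mult3 (e3_edge x y) (e3_edge x y) = e3_edge x y"
  unfolding covby_def
  by (intro fun3_eqI) (auto simp: e3_edge_def mult3_add_left mult3_e3_simps order.strict_iff_order)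

lemma mult3_e3_e3_edge: "z \<noteq> x \<Longrightarrow> mult3 (e3 z z z) (e3_edge x y) = (\<lambda>t. 0)"
  by (intro fun3_eqI) (auto simp: e3_edge_def mult3_e3_simps)

lemma mult3_e3_edge_e3: "z \<noteq> y \<Longrightarrow> mult3 (e3_edge x y) (e3 z z z) = (\<lambda>t. 0)"
  by (intro fun3_eqI) (auto simp: e3_edge_def mult3_e3_simps)

lemma diff_e3_edge_J3_2:
  assumes "h \<in> J3 1" "covby u v" "h (u, u, v) = 1" "h (u, v, v) = 1"
    and "\<And>a b. covby a b \<Longrightarrow> (a, b) \<noteq> (u, v) \<Longrightarrow> h (a, a, b) = 0 \<and> h (a, b, b) = 0"
  shows "(\<lambda>t. h t - e3_edge u v t) \<in> J3 2"
proof -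
  have "u \<noteq> v"
    using assms(2) unfolding covby_def by auto
  moreover have "(\<lambda>t. h t - e3_edge u v t) \<in> I3"
    using assms(1,2) I3_e3_edge[of u v] unfolding J3_1_iff covby_def by (blast intro: I3_diff less_imp_le)
  ultimately show ?thesis
    using assms unfolding J3_2_iff J3_1_iff covby_def by (auto simp: e3_edge_def e3_apply)
qed

locale I3_iso =
  fixes \<Phi> :: "('p::{order,finite} \<times> 'p \<times> 'p \<Rightarrow> 'r::comm_ring_1) \<Rightarrow> ('q::{order,finite} \<times> 'q \<times> 'q \<Rightarrow> 'r)"
    and \<phi> :: "'p \<Rightarrow> 'q"
  assumes alg_iso: "alg_iso3 \<Phi>"
    and bij: "bij \<phi>"
    and e3_diag_J3_1: "\<forall>x. (\<lambda>t. \<Phi> (e3 x x x) t - e3 (\<phi> x) (\<phi> x) (\<phi> x) t) \<in> J3 1"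
begin

lemma Phi_add: "f \<in> I3 \<Longrightarrow> g \<in> I3 \<Longrightarrow> \<Phi> (\<lambda>t. f t + g t) = (\<lambda>t. \<Phi> f t + \<Phi> g t)"
  using alg_iso unfolding alg_iso3_def by blast

lemma Phi_smult: "f \<in> I3 \<Longrightarrow> \<Phi> (\<lambda>t. c * f t) = (\<lambda>t. c * \<Phi> f t)"
  using alg_iso unfolding alg_iso3_def by blast

lemma Phi_mult3: "f \<in> I3 \<Longrightarrow> g \<in> I3 \<Longrightarrow> \<Phi> (mult3 f g) = mult3 (\<Phi> f) (\<Phi> g)"
  using alg_iso unfolding alg_iso3_def by blast

lemma Phi_I3: "f \<in> I3 \<Longrightarrow> \<Phi> f \<in> I3"
  using alg_iso unfolding alg_iso3_def bij_betw_def by blast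

lemma Phi_zero: "\<Phi> (\<lambda>t. 0) = (\<lambda>t. 0)"
  using Phi_smult[of "\<lambda>t. 0" 0] by (simp add: I3_def)

lemma Phi_sum: "(\<And>i. i \<in> S \<Longrightarrow> F i \<in> I3) \<Longrightarrow> \<Phi> (\<lambda>t. \<Sum>i\<in>S. F i t) = (\<lambda>t. \<Sum>i\<in>S. \<Phi> (F i) t)"
proof (induction S rule: infinite_finite_induct)
  case (insert i S)
  then show ?case
    by (simp add: Phi_add I3_sum)
qed (simp_all add: Phi_zero)

lemma phi_surj: obtains z where "\<phi> z = a"
  using bij by (metis bij_pointE)

lemma Phi_e3_diag: "\<Phi> (e3 x x x) (a, a, a) = (if a = \<phi> x then 1 else 0)"
  using e3_diag_J3_1 unfolding J3_1_iff by (auto simp: e3_apply dest!: spec[of _ x])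

lemma Phi_diag:
  assumes "h \<in> I3"
  shows "\<Phi> h (\<phi> z, \<phi> z, \<phi> z) = h (z, z, z)"
proof -
  have ez: "e3 z z z \<in> I3"
    by (simp add: I3_e3)
  have "mult3 (mult3 (e3 z z z) h) (e3 z z z) = (\<lambda>t. h (z, z, z) * e3 z z z t)"
    by (rule fun3_eqI) (auto simp: mult3_e3_simps)
  then have "mult3 (mult3 (\<Phi> (e3 z z z)) (\<Phi> h)) (\<Phi> (e3 z z z)) = (\<lambda>t. h (z, z, z) * \<Phi> (e3 z z z) t)"
    using Phi_mult3[OF I3_mult3 ez] Phi_mult3[OF ez assms] Phi_smult[OF ez] by metis
  from fun_cong[OF this, of "(\<phi> z, \<phi> z, \<phi> z)"] show ?thesis
    by (simp add: mult3_diag Phi_e3_diag)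
qed

lemma Phi_J3_1_iff:
  assumes "h \<in> I3"
  shows "\<Phi> h \<in> J3 1 \<longleftrightarrow> h \<in> J3 1"
  using assms Phi_I3[OF assms] Phi_diag[OF assms] phi_surj unfolding J3_1_iff by metis

lemma Phi_covby_left_zero:
  assumes "h \<in> J3 1" "mult3 (e3 z z z) h = (\<lambda>t. 0)" "covby (\<phi> z) b"
  shows "\<Phi> h (\<phi> z, \<phi> z, b) = 0"
proof -
  let ?a = "\<phi> z" and ?E = "\<Phi> (e3 z z z)" and ?K = "\<Phi> h"
  have hI: "h \<in> I3"
    using assms(1) unfolding J3_1_iff by blast
  have "mult3 ?E ?K = (\<lambda>t. 0)"
    using Phi_mult3[OF I3_e3 hI, of z z z] assms(2) by (simp add: Phi_zero)
  moreover have "?K (?a, ?a, ?a) = 0" "?K (b, b, b) = 0"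
    using assms(1) Phi_J3_1_iff[OF hI] unfolding J3_1_iff by auto
  ultimately show ?thesis
    using mult3_covby_left[OF assms(3), of ?E ?K] mult3_covby_right[OF assms(3), of ?E ?K]
    by (simp add: Phi_e3_diag fun_eq_iff)
qed

lemma Phi_covby_right_zero:
  assumes "h \<in> J3 1" "mult3 h (e3 z z z) = (\<lambda>t. 0)" "covby a (\<phi> z)"
  shows "\<Phi> h (a, \<phi> z, \<phi> z) = 0"
proof -
  let ?b = "\<phi> z" and ?E = "\<Phi> (e3 z z z)" and ?K = "\<Phi> h"
  have hI: "h \<in> I3"
    using assms(1) unfolding J3_1_iff by blast
  have "mult3 ?K ?E = (\<lambda>t. 0)"
    using Phi_mult3[OF hI I3_e3, of z z z] assms(2) by (simp add: Phi_zero)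
  moreover have "?K (a, a, a) = 0" "?K (?b, ?b, ?b) = 0"
    using assms(1) Phi_J3_1_iff[OF hI] unfolding J3_1_iff by auto
  ultimately show ?thesis
    using mult3_covby_left[OF assms(3), of ?K ?E] mult3_covby_right[OF assms(3), of ?K ?E]
    by (simp add: Phi_e3_diag fun_eq_iff)
qed

lemma Phi_e3_strict_J3_2:
  assumes "a < b" "b < c"
  shows "\<Phi> (e3 a b c) \<in> J3 2"
proof -
  have e: "e3 a b c \<in> J3 1"
    using assms I3_e3[of a b c] less_imp_le unfolding J3_1_iff by (auto simp: e3_apply)
  have "mult3 (e3 z z z) (e3 a b c) = (\<lambda>t. 0)" "mult3 (e3 a b c) (e3 z z z) = (\<lambda>t. 0)" for z
    using assms by (auto intro!: fun3_eqI simp: mult3_e3_simps)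
  then have "\<Phi> (e3 a b c) (a', a', b') = 0 \<and> \<Phi> (e3 a b c) (a', b', b') = 0" if "covby a' b'" for a' b'
    using Phi_covby_left_zero[OF e] Phi_covby_right_zero[OF e] that phi_surj by metis
  with e show ?thesis
    using Phi_J3_1_iff unfolding J3_2_iff J3_1_iff by blast
qed

lemma Phi_e3_J3_2:
  assumes "a \<le> b" "b \<le> c" "2 \<le> len a c"
  shows "\<Phi> (e3 a b c) \<in> J3 2"
proof -
  obtain z where z: "a < z" "z < c"
    using len_ge_2_imp_between[OF assms(3)] by blast
  then have I: "e3 a a z \<in> I3" "e3 a z c \<in> I3" "e3 z c c \<in> I3" "e3 a a a \<in> I3" "e3 c c c \<in> I3"
    by (auto intro: I3_e3 less_imp_le)
  consider "a = b" | "b = c" | "a < b" "b < c"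
    using assms(1,2) z by (metis order.strict_iff_order)
  then show ?thesis
  proof cases
    case 1
    have "\<Phi> (e3 a b c) = \<Phi> (mult3 (e3 a a a) (mult3 (e3 a a z) (e3 a z c)))"
      using 1 z by (intro arg_cong[where f = \<Phi>] fun3_eqI) (auto simp: mult3_e3_simps)
    also have "\<dots> = mult3 (\<Phi> (e3 a a a)) (mult3 (\<Phi> (e3 a a z)) (\<Phi> (e3 a z c)))"
      using Phi_mult3[OF I(4) I3_mult3] Phi_mult3[OF I(1,2)] by simp
    finally have "\<Phi> (e3 a b c) = \<dots>" .
    then show ?thesis
      using Phi_e3_strict_J3_2[OF z] by (simp add: J3_mult3_left)
  next
    case 2
    have "\<Phi> (e3 a b c) = \<Phi> (mult3 (mult3 (e3 a z c) (e3 z c c)) (e3 c c c))"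
      using 2 z by (intro arg_cong[where f = \<Phi>] fun3_eqI) (auto simp: mult3_e3_simps)
    also have "\<dots> = mult3 (mult3 (\<Phi> (e3 a z c)) (\<Phi> (e3 z c c))) (\<Phi> (e3 c c c))"
      using Phi_mult3[OF I3_mult3 I(5)] Phi_mult3[OF I(2,3)] by simp
    finally have "\<Phi> (e3 a b c) = \<dots>" .
    then show ?thesis
      using Phi_e3_strict_J3_2[OF z] by (simp add: J3_mult3_right)
  qed (rule Phi_e3_strict_J3_2)
qed

lemma Phi_J3_2:
  assumes "h \<in> J3 2"
  shows "\<Phi> h \<in> J3 2"
proof -
  define F where "F = (\<lambda>(a, b, c) s. h (a, b, c) * e3 a b c s)"
  have "h = (\<lambda>s. \<Sum>t\<in>UNIV. F t s)"
    by (subst I3_expansion) (simp add: F_def split_def)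
  moreover have "F t \<in> I3" for t
    using assms unfolding F_def J3_def I3_def by (auto simp: e3_def split: prod.split)
  moreover have "\<Phi> (F t) \<in> J3 2" for t
  proof -
    obtain a b c where t: "t = (a, b, c)"
      by (cases t)
    show ?thesis
    proof (cases "h t = 0")
      case True
      then show ?thesis
        using t Phi_zero by (simp add: F_def J3_def I3_def)
    next
      case False
      then have le: "a \<le> b" "b \<le> c"
        using assms t unfolding J3_def I3_def by auto
      have "2 \<le> len a c"
      proof (rule ccontr)
        assume "\<not> 2 \<le> len a c"
        with le assms have "h (a, b, c) = 0"
          unfolding J3_def by auto
        with False t show False
          by simp
      qed
      with le show ?thesis
        using t Phi_smult[OF I3_e3] by (simp add: F_def J3_smult Phi_e3_J3_2)
    qed
  qed
  ultimately show ?thesis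
    by (simp add: Phi_sum J3_sum)
qed

lemma inv_I3_iso: "I3_iso (inv_into I3 \<Phi>) (inv \<phi>)"
proof -
  let ?\<Psi> = "inv_into I3 \<Phi>"
  have bij_\<Phi>: "bij_betw \<Phi> I3 I3"
    using alg_iso unfolding alg_iso3_def by blast
  have \<Psi>_I3: "?\<Psi> F \<in> I3" if "F \<in> I3" for F
    using bij_betw_inv_into[OF bij_\<Phi>] that by (rule bij_betw_apply)
  have \<Phi>_\<Psi>: "\<Phi> (?\<Psi> F) = F" if "F \<in> I3" for F
    using bij_betw_inv_into_right[OF bij_\<Phi> that] .
  have \<Psi>_eqI: "?\<Psi> F = f" if "f \<in> I3" "\<Phi> f = F" for f F
    using bij_\<Phi> that unfolding bij_betw_def by (blast intro: inv_into_f_eq)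
  have "alg_iso3 ?\<Psi>"
    unfolding alg_iso3_def
  proof (intro conjI ballI allI)
    show "bij_betw ?\<Psi> I3 I3"
      using bij_\<Phi> by (rule bij_betw_inv_into)
    show "?\<Psi> (\<lambda>t. F t + G t) = (\<lambda>t. ?\<Psi> F t + ?\<Psi> G t)" if "F \<in> I3" "G \<in> I3" for F G
      using that by (intro \<Psi>_eqI) (simp_all add: I3_add \<Psi>_I3 Phi_add \<Phi>_\<Psi>)
    show "?\<Psi> (\<lambda>t. c * F t) = (\<lambda>t. c * ?\<Psi> F t)" if "F \<in> I3" for F c
      using that by (intro \<Psi>_eqI) (simp_all add: I3_smult \<Psi>_I3 Phi_smult \<Phi>_\<Psi>)
    show "?\<Psi> (mult3 F G) = mult3 (?\<Psi> F) (?\<Psi> G)" if "F \<in> I3" "G \<in> I3" for F G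
      using that by (intro \<Psi>_eqI) (simp_all add: I3_mult3 \<Psi>_I3 Phi_mult3 \<Phi>_\<Psi>)
  qed
  moreover have "(\<lambda>t. ?\<Psi> (e3 c c c) t - e3 (inv \<phi> c) (inv \<phi> c) (inv \<phi> c) t) \<in> J3 1" for c
  proof -
    have ec: "e3 c c c \<in> I3"
      by (simp add: I3_e3)
    have "?\<Psi> (e3 c c c) (b, b, b) = e3 c c c (\<phi> b, \<phi> b, \<phi> b)" for b
      using Phi_diag[OF \<Psi>_I3[OF ec], of b] \<Phi>_\<Psi>[OF ec] by simp
    then show ?thesis
      using I3_diff[OF \<Psi>_I3[OF ec] I3_e3] bij unfolding J3_1_iff by (auto simp: e3_apply bij_inv_eq_iff)
  qed
  ultimately show ?thesis
    using bij bij_imp_bij_inv unfolding I3_iso_def by blast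
qed

lemma Phi_J3_2_iff:
  assumes "h \<in> I3"
  shows "\<Phi> h \<in> J3 2 \<longleftrightarrow> h \<in> J3 2"
proof
  assume "\<Phi> h \<in> J3 2"
  interpret inv: I3_iso "inv_into I3 \<Phi>" "inv \<phi>"
    by (rule inv_I3_iso)
  have "inj_on \<Phi> I3"
    using alg_iso unfolding alg_iso3_def bij_betw_def by blast
  with assms inv.Phi_J3_2[OF \<open>\<Phi> h \<in> J3 2\<close>] show "h \<in> J3 2"
    by simp
qed (rule Phi_J3_2)

lemma Phi_e3_edge:
  assumes ind: "indecomposable_ring TYPE('r)" and xy: "covby x y"
  shows "covby (\<phi> x) (\<phi> y) \<and> (\<exists>\<sigma>\<in>J3 2. \<Phi> (e3_edge x y) = (\<lambda>t. e3_edge (\<phi> x) (\<phi> y) t + \<sigma> t))"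
proof -
  let ?u = "\<phi> x" and ?v = "\<phi> y" and ?g = "\<Phi> (e3_edge x y)"
  have "x < y"
    using xy by (simp add: covby_def)
  then have f: "e3_edge x y \<in> I3" and f_J3_1: "e3_edge x y \<in> J3 1"
    using I3_e3_edge[OF less_imp_le] e3_edge_J3_1 by blast+
  have g_J3_1: "?g \<in> J3 1"
    using Phi_J3_1_iff[OF f] f_J3_1 by simp
  have g_idem: "mult3 ?g ?g = ?g"
    using Phi_mult3[OF f f] e3_edge_idempotent[OF xy] by metis
  have g_off: "?g (a, a, b) = 0 \<and> ?g (a, b, b) = 0" if ab: "covby a b" "(a, b) \<noteq> (?u, ?v)" for a b
  proof -
    obtain z w where "a = \<phi> z" "b = \<phi> w"
      by (metis phi_surj)
    with ab have "?g (a, a, b) = 0 \<or> ?g (a, b, b) = 0"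
      using Phi_covby_left_zero[OF f_J3_1 mult3_e3_e3_edge, of z b]
        Phi_covby_right_zero[OF f_J3_1 mult3_e3_edge_e3, of w a]
      by blast
    then show ?thesis
      using idempotent_J3_1_covby(1)[OF g_J3_1 g_idem ab(1)] by auto
  qed
  have "?g \<notin> J3 2"
    using Phi_J3_2_iff[OF f] e3_edge_not_J3_2[OF xy] by simp
  then obtain a b where "covby a b" "?g (a, a, b) \<noteq> 0 \<or> ?g (a, b, b) \<noteq> 0"
    using g_J3_1 unfolding J3_2_iff J3_1_iff by blast
  then have uv: "covby ?u ?v" and "?g (?u, ?u, ?v) \<noteq> 0"
    using g_off idempotent_J3_1_covby(1)[OF g_J3_1 g_idem] by fastforce+
  then have "?g (?u, ?u, ?v) = 1"
    using idempotent_J3_1_covby(2)[OF g_J3_1 g_idem uv] ind unfolding indecomposable_ring_def by blast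
  then have "(\<lambda>t. ?g t - e3_edge ?u ?v t) \<in> J3 2"
    using diff_e3_edge_J3_2[OF g_J3_1 uv] g_off idempotent_J3_1_covby(1)[OF g_J3_1 g_idem uv] by simp
  with uv show ?thesis
    by (intro conjI bexI[of _ "\<lambda>t. ?g t - e3_edge ?u ?v t"]) auto
qed

end

theorem lemma3p4:
  fixes \<Phi> :: "('p::{order,finite} \<times> 'p \<times> 'p \<Rightarrow> 'r::comm_ring_1) \<Rightarrow> ('q::{order,finite} \<times> 'q \<times> 'q \<Rightarrow> 'r)"
    and \<phi> :: "'p \<Rightarrow> 'q"
  assumes "indecomposable_ring TYPE('r)"
    and "alg_iso3 \<Phi>"
    and "bij \<phi>"
    and "\<forall>x. (\<lambda>t. \<Phi> (e3 x x x) t - e3 (\<phi> x) (\<phi> x) (\<phi> x) t) \<in> J3 1"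
    and "x < y" and "len x y = 1"
  shows "\<phi> x < \<phi> y \<and>
    (\<exists>\<sigma>\<in>J3 2. \<Phi> (\<lambda>t. e3 x x y t + e3 x y y t)
        = (\<lambda>t. e3 (\<phi> x) (\<phi> x) (\<phi> y) t + e3 (\<phi> x) (\<phi> y) (\<phi> y) t + \<sigma> t))"
proof -
  interpret I3_iso \<Phi> \<phi>
    using assms(2-4) by unfold_locales
  have "covby x y"
    using assms(5,6) by (simp add: covby_iff_len)
  from Phi_e3_edge[OF assms(1) this] show ?thesis
    unfolding e3_edge_def covby_def by simp
qed

end
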